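(* Let $\varphi:\mathbb{R}^n\to(-\infty,\infty]$ be prox-regular at $\bar x$ for $0\in\partial\varphi(\bar x)$, and let $\bar x$ be a strong local minimizer of $\varphi$ with modulus $\sigma>0$. Then $$\langle z,w\rangle\ge\sigma\|w\|^2\quad\text{for all } w\in\mathbb{R}^n,\ z\in\breve\partial^2\varphi(\bar x,0)(w),$$ and consequently $\langle z,w\rangle>0$ for all $w\in\mathbb{R}^n\setminus\{0\}$ and $z\in\breve\partial^2\varphi(\bar x,0)(w)$.
   Context: $\bar x\in\operatorname{dom}\varphi$ is a strong local minimizer with modulus $\sigma>0$ if $\varphi(x)\ge\varphi(\bar x)+\frac\sigma2\|x-\bar x\|^2$ for all $x$ in a neighborhood of $\bar x$. Standard regular/limiting subdifferentials and coderivatives; $\breve\partial^2\varphi(\bar x,\bar v)(u):=\widehat D^*(\partial\varphi)(\bar x,\bar v)(u)$ where $\widehat D^*F(\bar x,\bar y)(u):=\{v:(v,-u)\in\widehat N_{\operatorname{gph}F}(\bar x,\bar y)\}$. Prox-regularity at $\bar x$ for $\bar v$: $\varphi$ finite and locally l.s.c. around $\bar x$ and there exist $\varepsilon>0,r\ge0$ with $\varphi(x)\ge\varphi(u)+\langle v,x-u\rangle-\frac r2\|x-u\|^2$ for all $\|x-\bar x\|<\varepsilon$, $v\in\partial\varphi(u)$, $\|v-\bar v\|<\varepsilon$, $\|u-\bar x\|<\varepsilon$, $\varphi(u)<\varphi(\bar x)+\varepsilon$. *)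

theory Defs
  imports "HOL-Analysis.Analysis"
begin

definition edom :: "('a \<Rightarrow> ereal) \<Rightarrow> 'a set" where
  "edom \<phi> = {x. \<bar>\<phi> x\<bar> \<noteq> \<infinity>}"

definition lsc_at :: "('a::topological_space \<Rightarrow> ereal) \<Rightarrow> 'a \<Rightarrow> bool" where
  "lsc_at \<phi> x \<longleftrightarrow> (\<forall>c < \<phi> x. eventually (\<lambda>y. c < \<phi> y) (at x))"

definition locally_lsc_around :: "('a::metric_space \<Rightarrow> ereal) \<Rightarrow> 'a \<Rightarrow> bool" where
  "locally_lsc_around \<phi> xb \<longleftrightarrow> (\<exists>\<delta>>0. \<forall>x\<in>ball xb \<delta>. lsc_at \<phi> x)"

definition reg_normal_cone :: "'a::real_inner set \<Rightarrow> 'a \<Rightarrow> 'a set" where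
  "reg_normal_cone \<Omega> xb =
     (if xb \<in> \<Omega> then
        {v. \<forall>\<epsilon>>0. \<exists>\<delta>>0. \<forall>x\<in>\<Omega>. norm (x - xb) < \<delta> \<longrightarrow>
              inner v (x - xb) \<le> \<epsilon> * norm (x - xb)}
      else {})"

definition reg_subdiff :: "('a::real_inner \<Rightarrow> ereal) \<Rightarrow> 'a \<Rightarrow> 'a set" where
  "reg_subdiff \<phi> x =
     (if x \<in> edom \<phi> then
        {v. \<forall>\<epsilon>>0. \<exists>\<delta>>0. \<forall>u. norm (u - x) < \<delta> \<longrightarrow>
              \<phi> u \<ge> \<phi> x + ereal (inner v (u - x) - \<epsilon> * norm (u - x))}
      else {})"

definition lim_subdiff :: "('a::real_inner \<Rightarrow> ereal) \<Rightarrow> 'a \<Rightarrow> 'a set" where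
  "lim_subdiff \<phi> xb =
     {v. xb \<in> edom \<phi> \<and>
         (\<exists>xs vs. xs \<longlonglongrightarrow> xb \<and> (\<lambda>k. \<phi> (xs k)) \<longlonglongrightarrow> \<phi> xb \<and>
                  (\<forall>k. vs k \<in> reg_subdiff \<phi> (xs k)) \<and> vs \<longlonglongrightarrow> v)}"

definition graph_sv :: "('a \<Rightarrow> 'b set) \<Rightarrow> ('a \<times> 'b) set" where
  "graph_sv F = {(x, y). y \<in> F x}"

definition reg_coderiv ::
  "('a::real_inner \<Rightarrow> 'b::real_inner set) \<Rightarrow> 'a \<Rightarrow> 'b \<Rightarrow> 'b \<Rightarrow> 'a set" where
  "reg_coderiv F xb yb u = {v. (v, - u) \<in> reg_normal_cone (graph_sv F) (xb, yb)}"

definition breve_subdiff2 :: "('a::real_inner \<Rightarrow> ereal) \<Rightarrow> 'a \<Rightarrow> 'a \<Rightarrow> 'a \<Rightarrow> 'a set" where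
  "breve_subdiff2 \<phi> xb vb u = reg_coderiv (lim_subdiff \<phi>) xb vb u"

definition prox_regular_at :: "('a::real_inner \<Rightarrow> ereal) \<Rightarrow> 'a \<Rightarrow> 'a \<Rightarrow> bool" where
  "prox_regular_at \<phi> xb vb \<longleftrightarrow>
     xb \<in> edom \<phi> \<and> locally_lsc_around \<phi> xb \<and>
     (\<exists>\<epsilon>>0. \<exists>r\<ge>0. \<forall>x u v.
        norm (x - xb) < \<epsilon> \<and> v \<in> lim_subdiff \<phi> u \<and> norm (v - vb) < \<epsilon> \<and>
        norm (u - xb) < \<epsilon> \<and> \<phi> u < \<phi> xb + ereal \<epsilon> \<longrightarrow>
        \<phi> x \<ge> \<phi> u + ereal (inner v (x - u) - r / 2 * (norm (x - u))\<^sup>2))"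

definition strong_local_min :: "('a::real_normed_vector \<Rightarrow> ereal) \<Rightarrow> 'a \<Rightarrow> real \<Rightarrow> bool" where
  "strong_local_min \<phi> xb \<sigma> \<longleftrightarrow>
     xb \<in> edom \<phi> \<and>
     (\<exists>\<delta>>0. \<forall>x\<in>ball xb \<delta>. \<phi> x \<ge> \<phi> xb + ereal (\<sigma> / 2 * (norm (x - xb))\<^sup>2))"

end

theory Submission
  imports Defs
begin

text \<open>
  Let \<open>(z, -w)\<close> be a regular normal to the graph of \<open>\<partial>\<phi>\<close> at \<open>(x\<^sub>0, 0)\<close>, fix
  \<open>0 < \<eta> < \<sigma>\<close>, \<open>\<mu> = \<eta> - \<sigma>\<close> and \<open>q = z + \<mu> w\<close>. For small \<open>t > 0\<close> minimise
  \<open>\<phi>(u) + \<mu>/2 |u - x\<^sub>0|\<^sup>2 - t\<langle>q, u - x\<^sub>0\<rangle>\<close> over a small closed ball. By the strong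
  minimality of \<open>x\<^sub>0\<close> the minimiser \<open>x\<^sub>t = x\<^sub>0 + a\<close> satisfies \<open>\<eta>/2 |a|\<^sup>2 \<le> t\<langle>q, a\<rangle>\<close>, so
  \<open>|a| = O(t)\<close>, \<open>x\<^sub>t\<close> is interior, and since \<open>\<mu> < 0\<close> the concave quadratic can be
  dropped, giving \<open>v\<^sub>t = tq - \<mu> a \<in> \<partial>\<phi>(x\<^sub>t)\<close>. Testing the normal against the
  graph points \<open>(x\<^sub>t, v\<^sub>t)\<close>, which are \<open>O(t)\<close>-close to \<open>(x\<^sub>0, 0)\<close>, yields
  \<open>\<langle>w, q\<rangle> \<ge> 0\<close>, i.e. \<open>\<langle>z, w\<rangle> \<ge> (\<sigma> - \<eta>)|w|\<^sup>2\<close>; now let \<open>\<eta> \<rightarrow> 0\<close>.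
\<close>

lemma lsc_attains_min_on_compact:
  fixes f :: "'a::metric_space \<Rightarrow> ereal"
  assumes K: "compact K" "K \<noteq> {}" and lsc: "\<forall>x\<in>K. lsc_at f x"
  shows "\<exists>x\<in>K. \<forall>y\<in>K. f x \<le> f y"
proof (rule ccontr)
  assume "\<not> ?thesis"
  then have better: "\<forall>x\<in>K. \<exists>y\<in>K. f y < f x" by (auto simp: not_le)
  have "\<forall>x\<in>K. \<exists>c U. open U \<and> x \<in> U \<and> (\<forall>y\<in>U. c < f y) \<and> (\<exists>y\<in>K. f y < c)"
  proof
    fix x assume x: "x \<in> K"
    obtain y where y: "y \<in> K" "f y < f x" using better x by blast
    obtain c where c: "f y < c" "c < f x" using y(2) dense by blast
    have "eventually (\<lambda>y. c < f y) (at x)" using lsc x c unfolding lsc_at_def by blast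
    then obtain U where "open U" "x \<in> U" "\<forall>y\<in>U. y \<noteq> x \<longrightarrow> c < f y"
      unfolding eventually_at_topological by blast
    then show "\<exists>c U. open U \<and> x \<in> U \<and> (\<forall>y\<in>U. c < f y) \<and> (\<exists>y\<in>K. f y < c)"
      using c y by metis
  qed
  then obtain c U where cU: "\<forall>x\<in>K. open (U x) \<and> x \<in> U x \<and> (\<forall>y\<in>U x. c x < f y) \<and> (\<exists>y\<in>K. f y < c x)"
    by metis
  obtain D where D: "D \<subseteq> K" "finite D" "K \<subseteq> (\<Union>x\<in>D. U x)"
    using compactE_image[OF K(1), of K U] cU by blast
  have "D \<noteq> {}" using D(3) K(2) by blast
  then have "Min (c ` D) \<in> c ` D" using D(2) by (intro Min_in) auto
  then obtain x0 where x0: "x0 \<in> D" "c x0 = Min (c ` D)" by auto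
  obtain y where y: "y \<in> K" "f y < c x0" using cU x0 D(1) by blast
  obtain x1 where x1: "x1 \<in> D" "y \<in> U x1" using D(3) y(1) by blast
  have "c x1 < f y" using cU x1 D(1) by blast
  moreover have "c x0 \<le> c x1" using x0 x1 D(2) by simp
  ultimately show False using y(2) by simp
qed

lemma lsc_at_add_continuous:
  fixes f :: "'a::metric_space \<Rightarrow> ereal"
  assumes lsc: "lsc_at f x" and proper: "\<forall>y. f y \<noteq> -\<infinity>" and g: "isCont g x"
  shows "lsc_at (\<lambda>y. f y + ereal (g y)) x"
  unfolding lsc_at_def
proof (intro allI impI)
  fix c assume c: "c < f x + ereal (g x)"
  show "eventually (\<lambda>y. c < f y + ereal (g y)) (at x)"
  proof (cases c)
    case MInf
    have "c < f y + ereal (g y)" for y using proper MInf by (cases "f y") auto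
    then show ?thesis by simp
  next
    case PInf then show ?thesis using c by simp
  next
    case (real r)
    have "ereal (r - g x) < f x" using c real proper by (cases "f x") auto
    then obtain d where d: "ereal (r - g x) < ereal d" "ereal d < f x" using ereal_dense2 by blast
    have "eventually (\<lambda>y. ereal d < f y) (at x)" using lsc d(2) unfolding lsc_at_def by blast
    moreover have "(g \<longlongrightarrow> g x) (at x)" using g isCont_def by blast
    then have "eventually (\<lambda>y. dist (g y) (g x) < d - (r - g x)) (at x)"
      using d(1) tendstoD by force
    ultimately show ?thesis
    proof eventually_elim
      case (elim y)
      then have "r < d + g y" by (auto simp: dist_real_def)
      then have "ereal r < ereal d + ereal (g y)" by simp
      also have "\<dots> < f y + ereal (g y)" using elim(1) by (cases "f y") auto
      finally show ?case using real by simp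
    qed
  qed
qed

lemma reg_subdiff_if_local_support:
  assumes "x \<in> edom \<phi>" "r > 0"
    and support: "\<forall>u. norm (u - x) < r \<longrightarrow> \<phi> u \<ge> \<phi> x + ereal (inner v (u - x))"
  shows "v \<in> reg_subdiff \<phi> x"
proof -
  have "\<phi> x + ereal (inner v (u - x) - \<epsilon> * norm (u - x)) \<le> \<phi> u"
    if "\<epsilon> > 0" "norm (u - x) < r" for \<epsilon> u
  proof -
    have "\<phi> x + ereal (inner v (u - x) - \<epsilon> * norm (u - x)) \<le> \<phi> x + ereal (inner v (u - x))"
      using \<open>\<epsilon> > 0\<close> by (intro add_left_mono) simp
    then show ?thesis using support that(2) by (meson order_trans)
  qed
  then show ?thesis using assms(1,2) unfolding reg_subdiff_def by auto
qed

lemma reg_subdiff_subset_lim_subdiff: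
  assumes "v \<in> reg_subdiff \<phi> x"
  shows "v \<in> lim_subdiff \<phi> x"
proof -
  have "x \<in> edom \<phi>" using assms unfolding reg_subdiff_def by (auto split: if_splits)
  then show ?thesis
    unfolding lim_subdiff_def mem_Collect_eq using assms
    by (intro conjI exI[of _ "\<lambda>_. x"] exI[of _ "\<lambda>_. v"]) auto
qed

lemma norm_le_of_quadratic_bound:
  fixes q a :: "'a::real_inner"
  assumes "\<eta> > 0" "\<eta> / 2 * (norm a)\<^sup>2 \<le> t * inner q a" "t \<ge> 0"
  shows "\<eta> * norm a \<le> 2 * t * norm q"
proof (cases "a = 0")
  case False
  have "\<eta> / 2 * norm a * norm a \<le> t * inner q a"
    using assms(2) by (simp add: power2_eq_square)
  also have "\<dots> \<le> t * norm q * norm a"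
    using mult_left_mono[OF order_trans[OF abs_ge_self Cauchy_Schwarz_ineq2] assms(3)]
    by (simp add: mult.assoc)
  finally have "\<eta> / 2 * norm a * norm a \<le> t * norm q * norm a" .
  then show ?thesis using False by (simp add: mult_le_cancel_right)
qed (use assms in simp)

lemma reg_normal_cone_linear_approach:
  assumes v: "v \<in> reg_normal_cone \<Omega> x0"
    and approach: "\<And>T. T > 0 \<Longrightarrow> \<exists>t p. 0 < t \<and> t < T \<and> x0 + p \<in> \<Omega> \<and>
                     norm p \<le> C * t \<and> c * t \<le> inner v p"
  shows "c \<le> 0"
proof (rule ccontr)
  assume "\<not> c \<le> 0"
  define \<epsilon> where "\<epsilon> = c / (\<bar>C\<bar> + 1)"
  have "\<epsilon> > 0" using \<open>\<not> c \<le> 0\<close> by (simp add: \<epsilon>_def)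
  have "x0 \<in> \<Omega>" using v unfolding reg_normal_cone_def by (auto split: if_splits)
  then obtain \<delta> where "\<delta> > 0" and
      normal: "\<forall>x\<in>\<Omega>. norm (x - x0) < \<delta> \<longrightarrow> inner v (x - x0) \<le> \<epsilon> * norm (x - x0)"
    using v \<open>\<epsilon> > 0\<close> unfolding reg_normal_cone_def by auto
  have "\<delta> / (\<bar>C\<bar> + 1) > 0" using \<open>\<delta> > 0\<close> by (intro divide_pos_pos) auto
  then obtain t p where tp: "0 < t" "t < \<delta> / (\<bar>C\<bar> + 1)" "x0 + p \<in> \<Omega>"
      "norm p \<le> C * t" "c * t \<le> inner v p"
    using approach by blast
  have "C * t \<le> (\<bar>C\<bar> + 1) * t" using tp(1) by (intro mult_right_mono) auto
  also have "\<dots> < \<delta>" using tp(2) by (simp add: pos_less_divide_eq mult.commute)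
  finally have "norm p < \<delta>" using tp(4) by linarith
  then have "inner v p \<le> \<epsilon> * norm p" using normal tp(3) by fastforce
  also have "\<dots> \<le> \<epsilon> * (C * t)" using tp(4) \<open>\<epsilon> > 0\<close> by simp
  also have "\<dots> < c * t"
  proof -
    have "0 \<le> C * t" using tp(4) norm_ge_zero order_trans by blast
    then have "C \<ge> 0" using tp(1) by (simp add: zero_le_mult_iff)
    then have "\<epsilon> * C < c" using \<open>\<not> c \<le> 0\<close> by (simp add: \<epsilon>_def field_simps)
    then show ?thesis using tp(1) by (simp add: mult.assoc[symmetric])
  qed
  finally show False using tp(5) by simp
qed

lemma reg_subdiff_at_min_of_concave_quadratic_perturbation:
  fixes \<phi> :: "'a::real_inner \<Rightarrow> ereal" and x0 p :: 'a and \<mu> :: real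
  defines "g \<equiv> \<lambda>u. \<mu> / 2 * (norm (u - x0))\<^sup>2 - inner p (u - x0)"
  assumes proper: "\<forall>u. \<phi> u \<noteq> -\<infinity>" and "x \<in> edom \<phi>" "r > 0" "\<mu> \<le> 0"
    and min: "\<forall>u. norm (u - x) < r \<longrightarrow> \<phi> x + ereal (g x) \<le> \<phi> u + ereal (g u)"
  shows "p - \<mu> *\<^sub>R (x - x0) \<in> reg_subdiff \<phi> x"
proof (rule reg_subdiff_if_local_support[OF \<open>x \<in> edom \<phi>\<close> \<open>r > 0\<close>], intro allI impI)
  fix u assume u: "norm (u - x) < r"
  obtain fx where fx: "\<phi> x = ereal fx" using \<open>x \<in> edom \<phi>\<close> proper unfolding edom_def by (cases "\<phi> x") auto
  show "\<phi> x + ereal (inner (p - \<mu> *\<^sub>R (x - x0)) (u - x)) \<le> \<phi> u"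
  proof (cases "\<phi> u")
    case (real fu)
    have "\<phi> x + ereal (g x) \<le> \<phi> u + ereal (g u)" using min u by blast
    then have "fx + g x \<le> fu + g u" by (simp add: fx real)
    moreover have "g u - g x = inner (\<mu> *\<^sub>R (x - x0) - p) (u - x) + \<mu> / 2 * (norm (u - x))\<^sup>2"
      unfolding g_def by (simp add: power2_norm_eq_inner inner_diff_right inner_commute algebra_simps)
    moreover have "\<mu> / 2 * (norm (u - x))\<^sup>2 \<le> 0" using \<open>\<mu> \<le> 0\<close> by (simp add: mult_nonpos_nonneg)
    moreover have "inner (p - \<mu> *\<^sub>R (x - x0)) (u - x) = - inner (\<mu> *\<^sub>R (x - x0) - p) (u - x)"
      by (simp add: inner_diff_left)
    ultimately have "fx + inner (p - \<mu> *\<^sub>R (x - x0)) (u - x) \<le> fu" by linarith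
    then show ?thesis using fx real by simp
  qed (use proper in auto)
qed

lemma perturbed_minimizer_near_strong_min:
  fixes \<phi> :: "'a::euclidean_space \<Rightarrow> ereal"
  assumes proper: "\<forall>x. \<phi> x \<noteq> -\<infinity>" and dom: "x0 \<in> edom \<phi>" and "R > 0"
    and lsc: "\<forall>x\<in>cball x0 R. lsc_at \<phi> x"
    and strong: "\<forall>x\<in>cball x0 R. \<phi> x \<ge> \<phi> x0 + ereal (\<sigma> / 2 * (norm (x - x0))\<^sup>2)"
    and "0 < \<eta>" "\<eta> < \<sigma>" "t > 0" and small: "2 * t * norm q < \<eta> * R"
  obtains a where "norm a < R" "\<eta> / 2 * (norm a)\<^sup>2 \<le> t * inner q a"
    "t *\<^sub>R q - (\<eta> - \<sigma>) *\<^sub>R a \<in> lim_subdiff \<phi> (x0 + a)"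
proof -
  define g where "g = (\<lambda>u. (\<eta> - \<sigma>) / 2 * (norm (u - x0))\<^sup>2 - inner (t *\<^sub>R q) (u - x0))"
  define \<psi> where "\<psi> = (\<lambda>u. \<phi> u + ereal (g u))"
  have "lsc_at \<psi> x" if "x \<in> cball x0 R" for x
    unfolding \<psi>_def using lsc that proper
    by (intro lsc_at_add_continuous) (auto simp: g_def intro!: continuous_intros)
  then obtain x where x: "x \<in> cball x0 R" and xmin: "\<forall>u\<in>cball x0 R. \<psi> x \<le> \<psi> u"
    using lsc_attains_min_on_compact[of "cball x0 R" \<psi>] \<open>R > 0\<close> by auto
  define a where "a = x - x0"
  obtain f0 where f0: "\<phi> x0 = ereal f0" using dom proper unfolding edom_def by (cases "\<phi> x0") auto
  have "\<psi> x \<le> \<psi> x0" using xmin \<open>R > 0\<close> by simp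
  then have "\<phi> x + ereal (g x) \<le> ereal f0" unfolding \<psi>_def g_def using f0 by simp
  then obtain fx where fx: "\<phi> x = ereal fx" and "fx + g x \<le> f0" using proper by (cases "\<phi> x") auto
  moreover have "fx \<ge> f0 + \<sigma> / 2 * (norm a)\<^sup>2" using strong x fx f0 unfolding a_def by force
  ultimately have quadratic: "\<eta> / 2 * (norm a)\<^sup>2 \<le> t * inner q a"
    unfolding g_def a_def by (simp add: algebra_simps add_divide_distrib diff_divide_distrib)
  have "\<eta> * norm a < \<eta> * R"
    using norm_le_of_quadratic_bound[OF \<open>0 < \<eta>\<close> quadratic] \<open>t > 0\<close> small by simp
  then have "norm a < R" using \<open>0 < \<eta>\<close> by simp
  have "\<psi> x \<le> \<psi> u" if "norm (u - x) < R - norm a" for u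
  proof -
    have "norm (u - x0) \<le> norm (u - x) + norm a"
      unfolding a_def by (metis diff_add_cancel norm_triangle_ineq add_diff_eq)
    then show ?thesis using xmin that by (simp add: dist_norm norm_minus_commute)
  qed
  then have "t *\<^sub>R q - (\<eta> - \<sigma>) *\<^sub>R a \<in> reg_subdiff \<phi> x"
    unfolding a_def using \<open>norm a < R\<close> \<open>\<eta> < \<sigma>\<close> fx
    by (intro reg_subdiff_at_min_of_concave_quadratic_perturbation[OF proper, where r = "R - norm a"])
       (auto simp: edom_def \<psi>_def g_def a_def)
  then show thesis
    using that \<open>norm a < R\<close> quadratic reg_subdiff_subset_lim_subdiff unfolding a_def by fastforce
qed

lemma breve_subdiff2_at_strong_min_lower_bound:
  fixes \<phi> :: "'a::euclidean_space \<Rightarrow> ereal"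
  assumes proper: "\<forall>x. \<phi> x \<noteq> -\<infinity>" and dom: "x0 \<in> edom \<phi>" and "R > 0"
    and lsc: "\<forall>x\<in>cball x0 R. lsc_at \<phi> x"
    and strong: "\<forall>x\<in>cball x0 R. \<phi> x \<ge> \<phi> x0 + ereal (\<sigma> / 2 * (norm (x - x0))\<^sup>2)"
    and "0 < \<eta>" "\<eta> < \<sigma>"
    and z: "z \<in> breve_subdiff2 \<phi> x0 0 w"
  shows "inner z w \<ge> (\<sigma> - \<eta>) * (norm w)\<^sup>2"
proof -
  define \<mu> where "\<mu> = \<eta> - \<sigma>"
  define q where "q = z + \<mu> *\<^sub>R w"
  define C where "C = (1 + \<bar>\<mu>\<bar>) * (2 * norm q / \<eta>) + norm q"
  have normal: "(z, - w) \<in> reg_normal_cone (graph_sv (lim_subdiff \<phi>)) (x0, 0)"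
    using z unfolding breve_subdiff2_def reg_coderiv_def by simp
  have "- inner w q \<le> 0"
  proof (rule reg_normal_cone_linear_approach[OF normal])
    fix T :: real assume "T > 0"
    define t where "t = min (T / 2) (\<eta> * R / (2 * (norm q + 1)))"
    have den: "2 * (norm q + 1) > 0" by (auto intro: add_nonneg_pos)
    then have "\<eta> * R / (2 * (norm q + 1)) > 0" using \<open>0 < \<eta>\<close> \<open>R > 0\<close> by simp
    then have "t > 0" "t < T" unfolding t_def using \<open>T > 0\<close> by (auto simp: min_less_iff_disj)
    have "t \<le> \<eta> * R / (2 * (norm q + 1))" unfolding t_def by simp
    then have "2 * t * (norm q + 1) \<le> \<eta> * R" using pos_le_divide_eq[OF den] by (simp add: algebra_simps)
    then have "2 * t * norm q < \<eta> * R" using \<open>t > 0\<close> by (simp add: algebra_simps)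
    then obtain a where a: "norm a < R" "\<eta> / 2 * (norm a)\<^sup>2 \<le> t * inner q a"
        "t *\<^sub>R q - \<mu> *\<^sub>R a \<in> lim_subdiff \<phi> (x0 + a)"
      using perturbed_minimizer_near_strong_min[OF proper dom \<open>R > 0\<close> lsc strong \<open>0 < \<eta>\<close> \<open>\<eta> < \<sigma>\<close> \<open>t > 0\<close>]
      unfolding \<mu>_def by blast
    define v where "v = t *\<^sub>R q - \<mu> *\<^sub>R a"
    have "(x0, 0) + (a, v) \<in> graph_sv (lim_subdiff \<phi>)"
      using a(3) unfolding graph_sv_def v_def by simp
    moreover have "norm (a, v) \<le> C * t"
    proof -
      have "\<eta> * norm a \<le> 2 * t * norm q"
        using norm_le_of_quadratic_bound[OF \<open>0 < \<eta>\<close> a(2)] \<open>t > 0\<close> by simp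
      then have "norm a \<le> (2 * norm q / \<eta>) * t" using \<open>0 < \<eta>\<close> by (simp add: field_simps)
      then have "(1 + \<bar>\<mu>\<bar>) * norm a \<le> (1 + \<bar>\<mu>\<bar>) * (2 * norm q / \<eta>) * t"
        by (metis mult.assoc mult_left_mono abs_ge_zero add_nonneg_nonneg zero_le_one)
      moreover have "norm v \<le> t * norm q + \<bar>\<mu>\<bar> * norm a"
        unfolding v_def using \<open>t > 0\<close> norm_triangle_ineq4[of "t *\<^sub>R q" "\<mu> *\<^sub>R a"] by simp
      ultimately show ?thesis
        using norm_Pair_le[of a v] unfolding C_def by (simp add: algebra_simps)
    qed
    moreover have "- inner w q * t \<le> inner (z, - w) (a, v)"
    proof -
      have "inner (z, - w) (a, v) = inner q a - t * inner w q"
        unfolding v_def q_def by (simp add: inner_add_left inner_add_right inner_diff_right inner_commute algebra_simps)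
      moreover have "0 \<le> t * inner q a"
        using a(2) \<open>0 < \<eta>\<close> by (meson order_trans zero_le_power2 mult_nonneg_nonneg half_gt_zero less_imp_le)
      then have "0 \<le> inner q a" using \<open>t > 0\<close> by (simp add: zero_le_mult_iff)
      ultimately show ?thesis by simp
    qed
    ultimately show "\<exists>t p. 0 < t \<and> t < T \<and> (x0, 0) + p \<in> graph_sv (lim_subdiff \<phi>) \<and>
        norm p \<le> C * t \<and> - inner w q * t \<le> inner (z, - w) p"
      using \<open>t > 0\<close> \<open>t < T\<close> by blast
  qed
  then show ?thesis
    unfolding q_def \<mu>_def by (simp add: inner_add_right inner_commute power2_norm_eq_inner algebra_simps)
qed

theorem theorem6p3:
  fixes \<phi> :: "'a::euclidean_space \<Rightarrow> ereal" and xb :: 'a and \<sigma> :: real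
  assumes proper: "\<forall>x. \<phi> x \<noteq> -\<infinity>"
    and zero_sub: "0 \<in> lim_subdiff \<phi> xb"
    and prox: "prox_regular_at \<phi> xb 0"
    and sigma_pos: "\<sigma> > 0"
    and smin: "strong_local_min \<phi> xb \<sigma>"
  shows "(\<forall>w z. z \<in> breve_subdiff2 \<phi> xb 0 w \<longrightarrow> inner z w \<ge> \<sigma> * (norm w)\<^sup>2) \<and>
         (\<forall>w z. w \<noteq> 0 \<and> z \<in> breve_subdiff2 \<phi> xb 0 w \<longrightarrow> inner z w > 0)"
proof -
  obtain \<delta>0 where "\<delta>0 > 0" and dom: "xb \<in> edom \<phi>"
    and strong: "\<forall>x\<in>ball xb \<delta>0. \<phi> x \<ge> \<phi> xb + ereal (\<sigma> / 2 * (norm (x - xb))\<^sup>2)"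
    using smin unfolding strong_local_min_def by blast
  obtain \<delta>1 where "\<delta>1 > 0" and lsc: "\<forall>x\<in>ball xb \<delta>1. lsc_at \<phi> x"
    using prox unfolding prox_regular_at_def locally_lsc_around_def by blast
  define R where "R = min \<delta>0 \<delta>1 / 2"
  have "R > 0" and "cball xb R \<subseteq> ball xb \<delta>0 \<inter> ball xb \<delta>1"
    unfolding R_def using \<open>\<delta>0 > 0\<close> \<open>\<delta>1 > 0\<close> by (auto simp: subset_iff)
  then have lsc_R: "\<forall>x\<in>cball xb R. lsc_at \<phi> x"
    and strong_R: "\<forall>x\<in>cball xb R. \<phi> x \<ge> \<phi> xb + ereal (\<sigma> / 2 * (norm (x - xb))\<^sup>2)"
    using lsc strong by blast+
  have lower: "inner z w \<ge> \<sigma> * (norm w)\<^sup>2" if "z \<in> breve_subdiff2 \<phi> xb 0 w" for w z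
  proof (rule tendsto_upperbound)
    show "((\<lambda>\<eta>. (\<sigma> - \<eta>) * (norm w)\<^sup>2) \<longlongrightarrow> \<sigma> * (norm w)\<^sup>2) (at_right 0)"
      by (auto intro!: tendsto_eq_intros)
    show "eventually (\<lambda>\<eta>. (\<sigma> - \<eta>) * (norm w)\<^sup>2 \<le> inner z w) (at_right 0)"
      using eventually_at_right_real[OF sigma_pos]
    proof eventually_elim
      case (elim \<eta>)
      then show ?case
        using breve_subdiff2_at_strong_min_lower_bound[OF proper dom \<open>R > 0\<close> lsc_R strong_R _ _ that]
        by simp
    qed
  qed (simp add: trivial_limit_at_right_real)
  have "\<sigma> * (norm w)\<^sup>2 > 0" if "w \<noteq> 0" for w :: 'a
    using that sigma_pos by simp
  with lower show ?thesis by (meson less_le_trans)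
qed

end
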